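(* Let $\mathcal A=\mathbb Q[u_0,u_1,u_2,\dots]$ graded by $\deg u_i=i$, and $\partial$ the derivation with $\partial(u_i)=u_{i+1}$. Define $b_k\in\mathcal A$ ($k\ge-1$) by $b_{-1}=1$ and for $k\ge0$ $$b_k=\sum_{\substack{k_1,k_2\ge-1\\k_1+k_2=k-2}}\Bigl[\frac{b_{k_1}\partial^2(b_{k_2})}4-\frac{\partial(b_{k_1})\partial(b_{k_2})}8+u_0b_{k_1}b_{k_2}\Bigr]-\frac12\sum_{\substack{k_1\ge0,\,k_2\ge-1\\k_1+k_2=k-2}}b_{k_1}b_{k_2+1}.$$ Let $D_k$ ($k\ge0$) be the derivation of $\mathcal A$ with $[D_k,\partial]=0$ and $D_k(u_0)=\frac{\partial(b_k)}{(2k+1)!!}$, and set $Q_k=\frac{\partial(b_k)}{(2k+1)!!}-\frac{u_0^k}{k!}u_1$. Then the $D_k$ commute pairwise, $D_0=\partial$, $Q_0=0$, $Q_1=\frac1{12}u_3$, and every $Q_k$ lies in $\mathcal A^{\ge2}$, the span of monomials of degree $\ge2$. *)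

theory Defs
  imports Complex_Main "HOL-Library.Poly_Mapping"
begin

text \<open>The polynomial ring A = Q[u_0,u_1,u_2,...]: a polynomial is a finitely supported
  map from monomials (finitely supported exponent vectors) to rational
  coefficients; multiplication is the convolution product of Poly_Mapping.\<close>

type_synonym poly\<A> = "(nat \<Rightarrow>\<^sub>0 nat) \<Rightarrow>\<^sub>0 rat"

definition cst :: "rat \<Rightarrow> poly\<A>" where
  "cst c = Poly_Mapping.single 0 c"

definition u :: "nat \<Rightarrow> poly\<A>" where
  "u i = Poly_Mapping.single (Poly_Mapping.single i 1) 1"

definition wdeg :: "(nat \<Rightarrow>\<^sub>0 nat) \<Rightarrow> nat" where
  "wdeg m = (\<Sum>i\<in>Poly_Mapping.keys m. i * Poly_Mapping.lookup m i)"

definition in_A_ge2 :: "poly\<A> \<Rightarrow> bool" where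
  "in_A_ge2 p \<longleftrightarrow> (\<forall>m\<in>Poly_Mapping.keys p. 2 \<le> wdeg m)"

definition is_derivation :: "(poly\<A> \<Rightarrow> poly\<A>) \<Rightarrow> bool" where
  "is_derivation D \<longleftrightarrow>
     (\<forall>p q. D (p + q) = D p + D q) \<and>
     (\<forall>c p. D (cst c * p) = cst c * D p) \<and>
     (\<forall>p q. D (p * q) = p * D q + D p * q)"

fun dfact :: "nat \<Rightarrow> nat" where
  "dfact 0 = 1"
| "dfact (Suc 0) = 1"
| "dfact (Suc (Suc n)) = Suc (Suc n) * dfact n"

text \<open>The sequence b_k, k \<ge> -1, stored shifted: bsh d j = b_{j-1}.  With j1 = k1+1,
  j2 = k2+1 the recursion of the paper reads as below.\<close>
fun bsh :: "(poly\<A> \<Rightarrow> poly\<A>) \<Rightarrow> nat \<Rightarrow> poly\<A>" where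
  "bsh d 0 = 1"
| "bsh d (Suc k) =
     (\<Sum>j\<le>k. cst (1/4) * bsh d j * d (d (bsh d (k - j)))
             - cst (1/8) * d (bsh d j) * d (bsh d (k - j))
             + u 0 * bsh d j * bsh d (k - j))
     - cst (1/2) * (\<Sum>j\<in>{1..k}. bsh d j * bsh d (k - j + 1))"

definition b :: "(poly\<A> \<Rightarrow> poly\<A>) \<Rightarrow> int \<Rightarrow> poly\<A>" where
  "b d k = bsh d (nat (k + 1))"

definition Q :: "(poly\<A> \<Rightarrow> poly\<A>) \<Rightarrow> nat \<Rightarrow> poly\<A>" where
  "Q d k = cst (1 / of_nat (dfact (2*k+1))) * d (b d (int k))
           - cst (1 / of_nat (fact k)) * u 0 ^ k * u 1"

end

theory Submission
  imports Defs "HOL-Computational_Algebra.Formal_Power_Series"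
begin

(* Put B(z) = \<Sum>_j b_{j-1} z^j.  The recursion for the b_k is the coefficientwise form of
     z (2 B \<partial>\<^sup>2B - (\<partial>B)\<^sup>2 + 8 u_0 B\<^sup>2) = 4 (B\<^sup>2 - 1),
   and applying \<partial> and cancelling the unit B gives the Lenard relation
     z (2 \<partial>\<^sup>3B + 8 u_1 B + 16 u_0 \<partial>B) = 8 \<partial>B.
   If X is a derivation commuting with \<partial>, then X(B) solves the linearisation at B of the first
   equation with inhomogeneous term X(u_0), and that linear equation has at most one solution.
   When X(u_0) = \<partial>b_k, a solution is z^{-k} W_k with W_k = \<partial>B \<cdot> B_{\<le>k} - B \<cdot> \<partial>B_{\<le>k}, where B_{\<le>k}
   keeps the terms of B of degree at most k; this follows from the Lenard relations for B and
   for B_{\<le>k}.  The coefficient of z^{k+l+1} in W_k is symmetric in k and l, so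
   (2k+1)!! D_k(b_l) = (2l+1)!! D_l(b_k).  Hence [D_k, D_l] kills u_0, and a derivation commuting
   with \<partial> that kills u_0 is zero.
   The statements on Q_k follow from b_k \<equiv> (2k+1)!!/(k+1)! u_0^{k+1} modulo monomials of positive
   degree: these numbers are the coefficients of (1 - 2z)^{-1/2}, whose square is (1 - 2z)^{-1},
   and this is exactly what the degree-zero part of the recursion requires. *)

unbundle fps_syntax

(* The second equation of bsh mentions bsh d (k - j + 1), which the simplifier rewrites to
   bsh d (Suc _): as a simp rule it loops. *)
declare bsh.simps(2) [simp del]

lemma cst_add: "cst x + cst y = cst (x + y)"
  by (simp add: cst_def single_add)

lemma cst_mult: "cst x * cst y = cst (x * y)"
  by (simp add: cst_def mult_single)

lemma cst_diff: "cst x - cst y = cst (x - y)"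
  by (simp add: cst_def single_diff)

lemma cst_0 [simp]: "cst 0 = 0"
  by (simp add: cst_def)

lemma cst_1 [simp]: "cst 1 = 1"
  by (simp add: cst_def)

lemma cst_numeral [simp]: "cst (numeral n) = numeral n"
  by (simp add: cst_def)

lemma cst_of_nat: "cst (of_nat n) = of_nat n"
  by (simp add: cst_def)

lemma cst_sum: "cst (sum f A) = (\<Sum>x\<in>A. cst (f x))"
  by (induction A rule: infinite_finite_induct) (auto simp flip: cst_add)

lemma cst_mult_numeral: "cst x * numeral n = cst (x * numeral n)"
  by (simp flip: cst_mult)

lemma cst_inverse_cancel:
  assumes "x \<noteq> 0"
  shows "cst x * (cst (1 / x) * p) = p" and "cst (1 / x) * (cst x * p) = p"
  using assms by (simp_all add: mult.assoc[symmetric] cst_mult)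

lemma poly_eq_sum_monomials:
  "p = (\<Sum>m\<in>Poly_Mapping.keys p. cst (Poly_Mapping.lookup p m) * Poly_Mapping.single m 1)"
proof (rule poly_mapping_eqI)
  fix x
  show "Poly_Mapping.lookup p x = Poly_Mapping.lookup
      (\<Sum>m\<in>Poly_Mapping.keys p. cst (Poly_Mapping.lookup p m) * Poly_Mapping.single m 1) x"
    by (cases "x \<in> Poly_Mapping.keys p")
      (auto simp: cst_def mult_single lookup_sum lookup_single when_def in_keys_iff sum.delta)
qed

lemma monomial_add:
  "Poly_Mapping.single (m + n) (1::rat) = Poly_Mapping.single m 1 * Poly_Mapping.single n 1"
  by (simp add: mult_single)

lemma monomial_single: "Poly_Mapping.single (Poly_Mapping.single a e) 1 = u a ^ e"
proof (induction e)
  case (Suc e)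
  have "Poly_Mapping.single a (Suc e) = Poly_Mapping.single a 1 + Poly_Mapping.single a e"
    by (simp flip: single_add)
  with Suc show ?case
    by (simp only: monomial_add u_def power_Suc)
qed simp

lemma update_eq_add:
  "a \<notin> Poly_Mapping.keys m \<Longrightarrow> Poly_Mapping.update a e m = m + Poly_Mapping.single a e"
  by (intro poly_mapping_eqI) (auto simp: lookup_update lookup_add lookup_single when_def in_keys_iff)

lemma monomial_update:
  "a \<notin> Poly_Mapping.keys m \<Longrightarrow>
    Poly_Mapping.single (Poly_Mapping.update a e m) 1 = Poly_Mapping.single m 1 * u a ^ e"
  by (simp add: update_eq_add monomial_add monomial_single)

locale derivation =
  fixes D :: "poly\<A> \<Rightarrow> poly\<A>"
  assumes is_derivation: "is_derivation D"
begin

lemma der_add: "D (p + q) = D p + D q"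
  using is_derivation unfolding is_derivation_def by blast

lemma der_cst_mult: "D (cst c * p) = cst c * D p"
  using is_derivation unfolding is_derivation_def by blast

lemma der_mult: "D (p * q) = p * D q + D p * q"
  using is_derivation unfolding is_derivation_def by blast

lemma der_0 [simp]: "D 0 = 0"
  using der_add[of 0 0] by simp

lemma der_uminus: "D (- p) = - D p"
  using der_add[of p "- p"] by (simp add: eq_neg_iff_add_eq_0 add.commute)

lemma der_diff: "D (p - q) = D p - D q"
  using der_add[of p "- q"] by (simp add: der_uminus)

lemma der_1 [simp]: "D 1 = 0"
  using der_mult[of 1 1] by simp

lemma der_cst [simp]: "D (cst c) = 0"
  using der_cst_mult[of c 1] by simp

lemma der_numeral [simp]: "D (numeral n) = 0"
  using der_cst[of "numeral n"] by simp

lemma der_sum: "D (sum f A) = (\<Sum>x\<in>A. D (f x))"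
  by (induction A rule: infinite_finite_induct) (auto simp: der_add)

lemma der_power: "D (p ^ Suc n) = of_nat (Suc n) * p ^ n * D p"
  by (induction n) (auto simp: der_mult algebra_simps)

end

lemma derivationI:
  assumes "\<And>p q. D (p + q) = D p + D q" and "\<And>c p. D (cst c * p) = cst c * D p"
    and "\<And>p q. D (p * q) = p * D q + D p * q"
  shows "derivation D"
  using assms by (simp add: derivation_def is_derivation_def)

lemma derivation_diff:
  assumes "derivation D\<^sub>1" and "derivation D\<^sub>2"
  shows "derivation (\<lambda>p. D\<^sub>1 p - D\<^sub>2 p)"
proof -
  interpret D\<^sub>1: derivation D\<^sub>1 by fact
  interpret D\<^sub>2: derivation D\<^sub>2 by fact
  show ?thesis
    by (rule derivationI)
      (simp_all add: D\<^sub>1.der_add D\<^sub>2.der_add D\<^sub>1.der_cst_mult D\<^sub>2.der_cst_mult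
        D\<^sub>1.der_mult D\<^sub>2.der_mult algebra_simps)
qed

lemma derivation_commutator:
  assumes "derivation D\<^sub>1" and "derivation D\<^sub>2"
  shows "derivation (\<lambda>p. D\<^sub>1 (D\<^sub>2 p) - D\<^sub>2 (D\<^sub>1 p))"
proof -
  interpret D\<^sub>1: derivation D\<^sub>1 by fact
  interpret D\<^sub>2: derivation D\<^sub>2 by fact
  show ?thesis
    by (rule derivationI)
      (simp_all add: D\<^sub>1.der_add D\<^sub>2.der_add D\<^sub>1.der_cst_mult D\<^sub>2.der_cst_mult
        D\<^sub>1.der_mult D\<^sub>2.der_mult algebra_simps)
qed

lemma derivation_cst_mult:
  assumes "derivation D"
  shows "derivation (\<lambda>p. cst c * D p)"
proof -
  interpret derivation D by fact
  show ?thesis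
    by (rule derivationI) (simp_all add: der_add der_cst_mult der_mult algebra_simps)
qed

lemma derivation_eq_zeroI:
  assumes "derivation E" and "\<And>i. E (u i) = 0"
  shows "E p = 0"
proof -
  interpret derivation E by fact
  have "E (u a ^ e) = 0" for a e
    by (induction e) (auto simp: der_mult assms(2))
  then have "E (Poly_Mapping.single m 1) = 0" for m
    by (induction m rule: update_induct) (simp_all add: monomial_update der_mult)
  then show ?thesis
    by (subst poly_eq_sum_monomials) (simp add: der_sum der_cst_mult)
qed

section \<open>The weighted degree filtration\<close>

definition deg_ge :: "nat \<Rightarrow> poly\<A> \<Rightarrow> bool" where
  "deg_ge w p \<longleftrightarrow> (\<forall>m\<in>Poly_Mapping.keys p. w \<le> wdeg m)"

lemma in_A_ge2_iff_deg_ge: "in_A_ge2 p \<longleftrightarrow> deg_ge 2 p"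
  by (simp add: in_A_ge2_def deg_ge_def)

lemma wdeg_superset:
  "finite S \<Longrightarrow> Poly_Mapping.keys m \<subseteq> S \<Longrightarrow> wdeg m = (\<Sum>i\<in>S. i * Poly_Mapping.lookup m i)"
  unfolding wdeg_def by (rule sum.mono_neutral_left) (auto simp: in_keys_iff)

lemma wdeg_add: "wdeg (m + n) = wdeg m + wdeg n"
proof -
  let ?S = "Poly_Mapping.keys m \<union> Poly_Mapping.keys n"
  have "Poly_Mapping.keys (m + n) \<subseteq> ?S"
    by (rule keys_add)
  then show ?thesis
    by (subst (1 2 3) wdeg_superset[of ?S]) (auto simp: lookup_add algebra_simps sum.distrib)
qed

lemma wdeg_single: "wdeg (Poly_Mapping.single a e) = a * e"
  by (cases "e = 0") (auto simp: wdeg_def)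

lemma deg_ge_0_left [simp]: "deg_ge 0 p"
  by (simp add: deg_ge_def)

lemma deg_ge_0_right [simp]: "deg_ge w 0"
  by (simp add: deg_ge_def)

lemma deg_ge_mono: "v \<le> w \<Longrightarrow> deg_ge w p \<Longrightarrow> deg_ge v p"
  by (auto simp: deg_ge_def)

lemma deg_ge_add: "deg_ge w p \<Longrightarrow> deg_ge w q \<Longrightarrow> deg_ge w (p + q)"
  using keys_add[of p q] unfolding deg_ge_def by blast

lemma deg_ge_uminus: "deg_ge w p \<Longrightarrow> deg_ge w (- p)"
  by (auto simp: deg_ge_def in_keys_iff)

lemma deg_ge_diff: "deg_ge w p \<Longrightarrow> deg_ge w q \<Longrightarrow> deg_ge w (p - q)"
  using deg_ge_add[of w p "- q"] by (simp add: deg_ge_uminus)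

lemma deg_ge_mult: "deg_ge v p \<Longrightarrow> deg_ge w q \<Longrightarrow> deg_ge (v + w) (p * q)"
  using keys_mult[of p q] unfolding deg_ge_def by (force simp: wdeg_add)

lemma deg_ge_mult_left: "deg_ge w q \<Longrightarrow> deg_ge w (p * q)"
  using deg_ge_mult[of 0 p w q] by simp

lemma deg_ge_sum: "(\<And>x. x \<in> A \<Longrightarrow> deg_ge w (f x)) \<Longrightarrow> deg_ge w (sum f A)"
  by (induction A rule: infinite_finite_induct) (auto intro: deg_ge_add)

lemma deg_ge_monomial: "deg_ge (wdeg m) (Poly_Mapping.single m c)"
  by (simp add: deg_ge_def)

lemma deg_ge_u_power: "deg_ge (a * e) (u a ^ e)"
  using deg_ge_monomial[of "Poly_Mapping.single a e" 1]
  by (simp add: monomial_single wdeg_single)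

lemma deg_ge_u: "deg_ge i (u i)"
  using deg_ge_u_power[of i 1] by simp

lemma deg_ge_mult_diff:
  assumes "deg_ge w (p - p')" and "deg_ge w (q - q')"
  shows "deg_ge w (p * q - p' * q')"
proof -
  have "p * q - p' * q' = q * (p - p') + p' * (q - q')"
    by (simp add: algebra_simps)
  then show ?thesis
    using assms by (simp add: deg_ge_add deg_ge_mult_left)
qed

lemma deg_ge_sum_diff:
  "(\<And>x. x \<in> A \<Longrightarrow> deg_ge w (f x - g x)) \<Longrightarrow> deg_ge w (sum f A - sum g A)"
  by (simp add: deg_ge_sum flip: sum_subtractf)

section \<open>The derivation \<open>\<partial>\<close>\<close>

locale shift_derivation = derivation d for d +
  assumes d_u [simp]: "d (u i) = u (Suc i)"
begin

lemma deg_ge_d: "deg_ge w p \<Longrightarrow> deg_ge (Suc w) (d p)"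
proof -
  have power: "deg_ge (Suc (a * e)) (d (u a ^ e))" for a e
  proof (cases e)
    case (Suc n)
    have "deg_ge (0 + a * n + Suc a) (of_nat (Suc n) * u a ^ n * u (Suc a))"
      by (intro deg_ge_mult deg_ge_u_power deg_ge_u deg_ge_0_left)
    moreover have "d (u a ^ e) = of_nat (Suc n) * u a ^ n * u (Suc a)"
      by (simp only: Suc der_power d_u)
    ultimately show ?thesis
      by (simp add: Suc add.commute)
  qed simp
  have monomial: "deg_ge (Suc (wdeg m)) (d (Poly_Mapping.single m 1))" for m
  proof (induction m rule: update_induct)
    case (update m a e)
    have "deg_ge (wdeg m + Suc (a * e)) (Poly_Mapping.single m 1 * d (u a ^ e))"
      by (intro deg_ge_mult deg_ge_monomial power)
    moreover have "deg_ge (Suc (wdeg m) + a * e) (d (Poly_Mapping.single m 1) * u a ^ e)"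
      by (intro deg_ge_mult update.IH deg_ge_u_power)
    moreover have "wdeg (Poly_Mapping.update a e m) = wdeg m + a * e"
      using update.hyps(1) by (simp add: update_eq_add wdeg_add wdeg_single)
    ultimately show ?case
      using update.hyps(1) by (simp add: monomial_update der_mult deg_ge_add)
  qed simp
  assume p: "deg_ge w p"
  have "deg_ge (Suc w) (cst (Poly_Mapping.lookup p m) * d (Poly_Mapping.single m 1))"
    if "m \<in> Poly_Mapping.keys p" for m
    using p that by (intro deg_ge_mult_left deg_ge_mono[OF _ monomial]) (simp add: deg_ge_def)
  then show ?thesis
    by (subst poly_eq_sum_monomials) (simp add: der_sum der_cst_mult deg_ge_sum)
qed

lemma deg_ge_1_d: "deg_ge 1 (d p)"
  using deg_ge_d[of 0 p] by simp

lemma commuting_derivation_eq_zeroI: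
  assumes "derivation E" and E_d: "\<And>p. E (d p) = d (E p)" and "E (u 0) = 0"
  shows "E p = 0"
proof (rule derivation_eq_zeroI[OF assms(1)])
  fix i
  show "E (u i) = 0"
  proof (induction i)
    case (Suc i)
    have "E (u (Suc i)) = d (E (u i))"
      by (simp flip: E_d)
    with Suc show ?case
      by simp
  qed (fact assms(3))
qed

lemma commuting_derivation_eqI:
  assumes "derivation X" and "\<And>p. X (d p) = d (X p)" and "X (u 0) = d (u 0)"
  shows "X = d"
proof
  fix p
  have "X p - d p = 0"
    by (rule commuting_derivation_eq_zeroI[OF derivation_diff[OF assms(1) derivation_axioms]])
      (simp_all add: assms(2,3) der_diff)
  then show "X p = d p"
    by simp
qed

lemma bsh_1: "bsh d (Suc 0) = u 0"
  using bsh.simps(2)[of d 0] by simp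

lemma bsh_2: "bsh d 2 = cst (1/4) * u 2 + cst (3/2) * (u 0 * u 0)"
proof -
  have "bsh d 2 = cst (1/4) * u 2 + (2 - cst (1/2)) * (u 0 * u 0)"
    using bsh.simps(2)[of d 1] bsh_1 by (simp add: numeral_2_eq_2 algebra_simps)
  also have "2 - cst (1/2) = cst (3/2)"
    using cst_diff[of 2 "1/2"] by simp
  finally show ?thesis .
qed

end

section \<open>The part of \<open>b\<^sub>k\<close> of degree zero\<close>

definition b_lead_coeff :: "nat \<Rightarrow> rat" where
  "b_lead_coeff j = (- 2) ^ j * ((- 1 / 2) gchoose j)"

definition b_lead_term :: "nat \<Rightarrow> poly\<A>" where
  "b_lead_term j = cst (b_lead_coeff j) * u 0 ^ j"

lemma b_lead_coeff_convolution: "(\<Sum>j\<le>n. b_lead_coeff j * b_lead_coeff (n - j)) = 2 ^ n"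
proof -
  have "(\<Sum>j\<le>n. b_lead_coeff j * b_lead_coeff (n - j))
      = (- 2) ^ n * (\<Sum>j=0..n. ((- 1 / 2) gchoose j) * ((- 1 / 2) gchoose (n - j)))"
    unfolding sum_distrib_left atLeast0AtMost b_lead_coeff_def
    by (intro sum.cong refl) (simp add: algebra_simps flip: power_add)
  also have "\<dots> = (- 2) ^ n * ((- 1) gchoose n)"
    by (simp add: gbinomial_Vandermonde)
  also have "((- 1 :: rat) gchoose n) = (- 1) ^ n"
    using gbinomial_minus[of 1 n] by (simp flip: binomial_gbinomial)
  finally show ?thesis
    by (simp flip: power_mult_distrib)
qed

lemma b_lead_coeff_rec:
  "b_lead_coeff (Suc k) = (\<Sum>j\<le>k. b_lead_coeff j * b_lead_coeff (k - j))
     - 1 / 2 * (\<Sum>j\<in>{1..k}. b_lead_coeff j * b_lead_coeff (k - j + 1))"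
proof -
  have "{..Suc k} = insert 0 (insert (Suc k) {1..k})"
    by auto
  then have "(2::rat) ^ Suc k
      = 2 * b_lead_coeff (Suc k) + (\<Sum>j\<in>{1..k}. b_lead_coeff j * b_lead_coeff (k - j + 1))"
    using b_lead_coeff_convolution[of "Suc k"] by (simp add: Suc_diff_le b_lead_coeff_def)
  then show ?thesis
    using b_lead_coeff_convolution[of k] by simp
qed

lemma b_lead_coeff_Suc:
  "of_nat (Suc k) * b_lead_coeff (Suc k) = of_nat (2 * k + 1) * b_lead_coeff k"
proof -
  have G: "of_nat (Suc k) * ((- 1 / 2 :: rat) gchoose Suc k)
      = - (of_nat (2 * k + 1) / 2) * ((- 1 / 2) gchoose k)"
    using gbinomial_mult_1[of "- 1 / 2 :: rat" k] by (simp add: field_simps)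
  have "of_nat (Suc k) * b_lead_coeff (Suc k)
      = (- 2) ^ Suc k * (of_nat (Suc k) * ((- 1 / 2) gchoose Suc k))"
    by (simp only: b_lead_coeff_def ac_simps)
  also have "\<dots> = of_nat (2 * k + 1) * b_lead_coeff k"
    by (simp only: G) (simp add: b_lead_coeff_def field_simps)
  finally show ?thesis .
qed

lemma b_lead_coeff_closed_form:
  "b_lead_coeff (Suc k) = of_nat (dfact (2 * k + 1)) / fact (Suc k)"
proof (induction k)
  case 0
  show ?case
    by (simp add: b_lead_coeff_def)
next
  case (Suc k)
  have "b_lead_coeff (Suc (Suc k))
      = of_nat (2 * Suc k + 1) / of_nat (Suc (Suc k)) * b_lead_coeff (Suc k)"
    using b_lead_coeff_Suc[of "Suc k"] by (simp add: eq_divide_eq mult.commute del: of_nat_Suc)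
  also have "\<dots> = of_nat ((2 * Suc k + 1) * dfact (2 * k + 1)) / (of_nat (Suc (Suc k)) * fact (Suc k))"
    by (simp only: Suc of_nat_mult times_divide_times_eq)
  also have "(2 * Suc k + 1) * dfact (2 * k + 1) = dfact (2 * Suc k + 1)"
    by (simp add: numeral_2_eq_2)
  finally show ?case
    by (simp only: fact_Suc[of "Suc k"])
qed

lemma b_lead_term_rec:
  "b_lead_term (Suc k) = (\<Sum>j\<le>k. u 0 * (b_lead_term j * b_lead_term (k - j)))
     - cst (1 / 2) * (\<Sum>j\<in>{1..k}. b_lead_term j * b_lead_term (k - j + 1))"
proof -
  have mult: "b_lead_term i * b_lead_term j = cst (b_lead_coeff i * b_lead_coeff j) * u 0 ^ (i + j)"
    for i j
    by (simp add: b_lead_term_def ac_simps power_add flip: cst_mult)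
  have sum1: "(\<Sum>j\<le>k. u 0 * (b_lead_term j * b_lead_term (k - j)))
      = cst (\<Sum>j\<le>k. b_lead_coeff j * b_lead_coeff (k - j)) * u 0 ^ Suc k"
    unfolding cst_sum sum_distrib_right
    by (intro sum.cong refl) (simp add: mult mult.left_commute flip: power_Suc)
  have sum2: "(\<Sum>j\<in>{1..k}. b_lead_term j * b_lead_term (k - j + 1))
      = cst (\<Sum>j\<in>{1..k}. b_lead_coeff j * b_lead_coeff (k - j + 1)) * u 0 ^ Suc k"
    unfolding cst_sum sum_distrib_right by (intro sum.cong refl) (simp add: mult)
  show ?thesis
    unfolding sum1 sum2
    by (simp only: b_lead_term_def[of "Suc k"] b_lead_coeff_rec[of k] mult.assoc left_diff_distrib
        flip: cst_mult cst_diff)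
qed

lemma dfact_pos: "0 < dfact n"
  by (induction n rule: dfact.induct) auto

lemma b_int: "b d (int k) = bsh d (Suc k)"
proof -
  have "nat (int k + 1) = Suc k"
    by simp
  then show ?thesis
    by (simp only: b_def)
qed

context shift_derivation
begin

lemma bsh_lead_term: "deg_ge 1 (bsh d j - b_lead_term j)"
proof (induction j rule: less_induct)
  case (less j)
  show ?case
  proof (cases j)
    case (Suc k)
    let ?A = b_lead_term
    have IH: "deg_ge 1 (bsh d i - ?A i)" if "i \<le> k" for i
      using less Suc that by simp
    define P where "P j = cst (1/4) * bsh d j * d (d (bsh d (k - j)))
      - cst (1/8) * d (bsh d j) * d (bsh d (k - j))" for j
    have "bsh d (Suc k) = (\<Sum>j\<le>k. P j) + (\<Sum>j\<le>k. u 0 * (bsh d j * bsh d (k - j)))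
        - cst (1/2) * (\<Sum>j\<in>{1..k}. bsh d j * bsh d (k - j + 1))"
      by (simp only: bsh.simps(2) P_def mult.assoc flip: sum.distrib)
    then have "bsh d (Suc k) - ?A (Suc k) = (\<Sum>j\<le>k. P j)
        + ((\<Sum>j\<le>k. u 0 * (bsh d j * bsh d (k - j))) - (\<Sum>j\<le>k. u 0 * (?A j * ?A (k - j))))
        - cst (1/2) * ((\<Sum>j\<in>{1..k}. bsh d j * bsh d (k - j + 1))
                       - (\<Sum>j\<in>{1..k}. ?A j * ?A (k - j + 1)))"
      unfolding b_lead_term_rec by (simp add: algebra_simps)
    also have "deg_ge 1 \<dots>"
    proof -
      have "deg_ge 1 (\<Sum>j\<le>k. P j)"
        unfolding P_def by (intro deg_ge_sum deg_ge_diff deg_ge_mult_left deg_ge_1_d)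
      moreover have "deg_ge 1 ((\<Sum>j\<le>k. u 0 * (bsh d j * bsh d (k - j)))
          - (\<Sum>j\<le>k. u 0 * (?A j * ?A (k - j))))"
        using IH by (intro deg_ge_sum_diff deg_ge_mult_diff) auto
      moreover have "deg_ge 1 ((\<Sum>j\<in>{1..k}. bsh d j * bsh d (k - j + 1))
          - (\<Sum>j\<in>{1..k}. ?A j * ?A (k - j + 1)))"
        using IH by (intro deg_ge_sum_diff deg_ge_mult_diff) auto
      ultimately show ?thesis
        by (meson deg_ge_add deg_ge_diff deg_ge_mult_left)
    qed
    finally show ?thesis
      by (simp add: Suc)
  qed (simp add: b_lead_term_def b_lead_coeff_def)
qed

lemma Q_0: "Q d 0 = 0"
  by (simp add: Q_def b_def bsh_1)

lemma Q_1: "Q d 1 = cst (1/12) * u 3"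
proof -
  have "d (bsh d 2) = cst (1/4) * u 3 + cst (3/2) * (2 * (u 0 * u 1))"
    by (simp add: bsh_2 der_add der_cst_mult der_mult mult.commute[of "u 1"])
  also have "\<dots> = cst (1/4) * u 3 + cst 3 * (u 0 * u 1)"
    by (simp add: mult.assoc[symmetric] cst_mult_numeral)
  moreover have "dfact 3 = 3"
    by (simp add: numeral_3_eq_3)
  ultimately have "Q d 1 = cst (1/3) * (cst (1/4) * u 3 + cst 3 * (u 0 * u 1)) - u 0 * u 1"
    by (simp add: Q_def b_def)
  also have "\<dots> = cst (1/12) * u 3"
    by (simp add: distrib_left mult.assoc[symmetric] cst_mult cst_mult_numeral)
  finally show ?thesis .
qed

lemma Q_deg_ge_2: "deg_ge 2 (Q d k)"
proof -
  define c where "c = b_lead_coeff (Suc k)"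
  define r where "r = bsh d (Suc k) - b_lead_term (Suc k)"
  have "d (b_lead_term (Suc k)) = cst c * (of_nat (Suc k) * u 0 ^ k * u 1)"
    by (simp only: b_lead_term_def c_def der_cst_mult der_power d_u One_nat_def)
  also have "\<dots> = cst (c * of_nat (Suc k)) * (u 0 ^ k * u 1)"
    by (simp only: cst_mult[symmetric] cst_of_nat mult.assoc)
  finally have d_bsh: "d (bsh d (Suc k)) = cst (c * of_nat (Suc k)) * (u 0 ^ k * u 1) + d r"
    unfolding r_def by (simp add: der_diff)
  have coeff: "1 / of_nat (dfact (2 * k + 1)) * c * of_nat (Suc k) = 1 / of_nat (fact k)"
    using dfact_pos[of "2 * k + 1"] unfolding c_def b_lead_coeff_closed_form
    by (simp add: field_simps del: of_nat_Suc)
  have "Q d k = cst (1 / of_nat (dfact (2 * k + 1))) * d (bsh d (Suc k))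
      - cst (1 / of_nat (fact k)) * u 0 ^ k * u 1"
    by (simp add: Q_def b_int)
  also have "\<dots> = cst (1 / of_nat (dfact (2 * k + 1))) * d r"
    unfolding d_bsh distrib_left by (simp only: mult.assoc[symmetric] cst_mult coeff) simp
  finally have "Q d k = cst (1 / of_nat (dfact (2 * k + 1))) * d r" .
  moreover have "deg_ge 2 (d r)"
    using deg_ge_d[OF bsh_lead_term[of "Suc k"]] by (simp add: r_def numeral_2_eq_2)
  ultimately show ?thesis
    by (simp add: deg_ge_mult_left)
qed

end

section \<open>Power series over \<open>\<A>\<close>\<close>

lemma fps_numeral_mult_nth [simp]: "(numeral k * f) $ n = numeral k * f $ n"
  by (simp add: numeral_fps_const)

lemma fps_X_power_dvd_iff: "fps_X ^ n dvd f \<longleftrightarrow> (\<forall>i<n. f $ i = 0)"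
proof
  assume "fps_X ^ n dvd f"
  then obtain g where "f = fps_X ^ n * g" ..
  then show "\<forall>i<n. f $ i = 0"
    by (simp add: fps_X_power_mult_nth)
next
  assume "\<forall>i<n. f $ i = 0"
  then have "fps_cutoff n f = 0"
    by (intro fps_ext) simp
  then have "f = fps_X ^ n * fps_shift n f"
    using fps_shift_cutoff'[of n f] by simp
  then show "fps_X ^ n dvd f" ..
qed

lemma fps_X_power_mult_shift: "fps_X ^ n dvd f \<Longrightarrow> fps_X ^ n * fps_shift n f = f"
  by (elim dvdE) (simp add: mult.commute)

lemma fps_mult_left_cancel:
  fixes f g :: "'a::comm_ring_1 fps"
  assumes "x * f $ 0 = 1" and "f * g = 0"
  shows "g = 0"
proof -
  have "g = fps_left_inverse f x * f * g"
    using fps_left_inverse[OF assms(1)] by simp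
  with assms(2) show ?thesis
    by (simp add: mult.assoc)
qed

lemma fps_X_power_mult_cancel:
  fixes f :: "'a::comm_ring_1 fps"
  assumes "fps_X ^ n * f = 0"
  shows "f = 0"
proof -
  have "f = fps_shift n (f * fps_X ^ n)"
    by simp
  also have "f * fps_X ^ n = 0"
    using assms by (simp add: mult.commute)
  finally show ?thesis
    by simp
qed

lemma fps_causal_eq_zero:
  fixes L :: "'a::comm_ring_1 fps \<Rightarrow> 'a fps"
  assumes causal: "\<And>n g. fps_X ^ n dvd g \<Longrightarrow> fps_X ^ n dvd L g"
    and unit: "x * f $ 0 = 1"
    and eq: "fps_X * L g = f * g"
  shows "g = 0"
proof -
  have "fps_X ^ n dvd g" for n
  proof (induction n)
    case (Suc n)
    then obtain h where g: "g = fps_X ^ n * h" ..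
    from causal[OF Suc] obtain l where "L g = fps_X ^ n * l" ..
    then have "fps_X * L g = fps_X ^ Suc n * l"
      by (simp add: mult.assoc)
    then have "(f * g) $ n = 0"
      by (simp add: fps_X_power_mult_nth del: power_Suc flip: eq)
    moreover have "(f * g) $ n = f $ 0 * g $ n"
      using g by (simp add: mult.left_commute[of f] fps_X_power_mult_nth)
    ultimately have "g $ n = 0"
      using unit by (metis mult.assoc mult_1 mult_zero_right)
    with Suc show ?case
      unfolding fps_X_power_dvd_iff by (auto simp: less_Suc_eq)
  qed simp
  then show ?thesis
    by (intro fps_ext) (auto simp: fps_X_power_dvd_iff)
qed

definition fps_map :: "('a \<Rightarrow> 'b) \<Rightarrow> 'a fps \<Rightarrow> 'b fps" where
  "fps_map f F = Abs_fps (\<lambda>n. f (F $ n))"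

lemma fps_map_nth [simp]: "fps_map f F $ n = f (F $ n)"
  by (simp add: fps_map_def)

lemma fps_map_commute: "(\<And>p. f (g p) = g (f p)) \<Longrightarrow> fps_map f (fps_map g F) = fps_map g (fps_map f F)"
  by (intro fps_ext) simp

context derivation
begin

lemma fps_map_add: "fps_map D (F + G) = fps_map D F + fps_map D G"
  by (intro fps_ext) (simp add: der_add)

lemma fps_map_diff: "fps_map D (F - G) = fps_map D F - fps_map D G"
  by (intro fps_ext) (simp add: der_diff)

lemma fps_map_mult: "fps_map D (F * G) = F * fps_map D G + fps_map D F * G"
  by (intro fps_ext) (simp add: fps_mult_nth der_sum der_mult sum.distrib)

lemma fps_map_const [simp]: "fps_map D (fps_const c) = fps_const (D c)"
  by (intro fps_ext) simp

lemma fps_map_numeral [simp]: "fps_map D (numeral k) = 0"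
  by (intro fps_ext) (simp add: numeral_fps_const)

lemma fps_map_X_power [simp]: "fps_map D (fps_X ^ k) = 0"
  by (intro fps_ext) simp

lemma fps_map_X [simp]: "fps_map D fps_X = 0"
  using fps_map_X_power[of 1] by simp

lemma fps_map_X_power_mult: "fps_map D (fps_X ^ k * F) = fps_X ^ k * fps_map D F"
  by (simp add: fps_map_mult)

lemma fps_X_power_dvd_map: "fps_X ^ n dvd F \<Longrightarrow> fps_X ^ n dvd fps_map D F"
  by (elim dvdE) (simp add: fps_map_X_power_mult)

lemmas fps_map_simps = fps_map_add fps_map_diff fps_map_mult

end

section \<open>The generating series of the \<open>b\<^sub>k\<close>\<close>

context shift_derivation
begin

abbreviation b_series :: "poly\<A> fps" (\<open>B\<close>) where
  "B \<equiv> Abs_fps (bsh d)"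

abbreviation fps_d :: "poly\<A> fps \<Rightarrow> poly\<A> fps" (\<open>\<delta>\<close>) where
  "\<delta> \<equiv> fps_map d"

lemma bsh_Suc_times_8:
  "8 * bsh d (Suc m) = (\<Sum>j\<le>m. 2 * (bsh d j * d (d (bsh d (m - j))))
      - d (bsh d j) * d (bsh d (m - j)) + 8 * (u 0 * (bsh d j * bsh d (m - j))))
    - 4 * (\<Sum>j\<in>{1..m}. bsh d j * bsh d (m - j + 1))"
proof -
  have eight: "8 * (cst (1/4) * x * y - cst (1/8) * z * w + v) = 2 * (x * y) - z * w + 8 * v"
    for x y z w v :: poly\<A>
  proof -
    have "8 * (cst (1/4) * x * y - cst (1/8) * z * w + v)
        = (8 * cst (1/4)) * (x * y) - (8 * cst (1/8)) * (z * w) + 8 * v"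
      by algebra
    moreover have "8 * cst (1/4) = (2::poly\<A>)" and "8 * cst (1/8) = (1::poly\<A>)"
      using cst_mult[of 8 "1/4"] cst_mult[of 8 "1/8"] by simp_all
    ultimately show ?thesis
      by simp
  qed
  have half: "8 * (cst (1/2) * S) = 4 * S" for S :: poly\<A>
    using cst_mult[of 8 "1/2"] by (simp add: mult.assoc[symmetric])
  show ?thesis
    unfolding bsh.simps(2) right_diff_distrib sum_distrib_left half eight
    by (simp only: mult.assoc)
qed

lemma b_series_square_nth:
  "(B * B) $ Suc m = 2 * bsh d (Suc m) + (\<Sum>j\<in>{1..m}. bsh d j * bsh d (m - j + 1))"
proof -
  have "{0..Suc m} = insert 0 (insert (Suc m) {1..m})"
    by auto
  then have "(B * B) $ Suc m = (\<Sum>i\<in>insert 0 (insert (Suc m) {1..m}). bsh d i * bsh d (Suc m - i))"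
    by (simp only: fps_mult_nth fps_nth_Abs_fps)
  also have "\<dots> = 2 * bsh d (Suc m) + (\<Sum>i\<in>{1..m}. bsh d i * bsh d (Suc m - i))"
    by simp
  also have "(\<Sum>i\<in>{1..m}. bsh d i * bsh d (Suc m - i)) = (\<Sum>j\<in>{1..m}. bsh d j * bsh d (m - j + 1))"
    by (intro sum.cong refl) (simp add: Suc_diff_le)
  finally show ?thesis .
qed

lemma b_series_equation:
  "fps_X * (2 * (B * \<delta> (\<delta> B)) - \<delta> B * \<delta> B + 8 * (fps_const (u 0) * (B * B))) = 4 * (B * B) - 4"
proof (rule fps_ext)
  fix n
  show "(fps_X * (2 * (B * \<delta> (\<delta> B)) - \<delta> B * \<delta> B + 8 * (fps_const (u 0) * (B * B)))) $ n
      = (4 * (B * B) - 4) $ n"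
  proof (cases n)
    case (Suc m)
    have "(fps_X * (2 * (B * \<delta> (\<delta> B)) - \<delta> B * \<delta> B + 8 * (fps_const (u 0) * (B * B)))) $ Suc m
        = (\<Sum>j\<le>m. 2 * (bsh d j * d (d (bsh d (m - j))))
            - d (bsh d j) * d (bsh d (m - j)) + 8 * (u 0 * (bsh d j * bsh d (m - j))))"
      by (simp add: fps_X_mult_nth fps_mult_nth[of B] fps_mult_nth[of "\<delta> B"] atLeast0AtMost
          sum_distrib_left sum_subtractf sum.distrib)
    also have "\<dots> = (4 * (B * B) - 4) $ Suc m"
      using bsh_Suc_times_8[of m] b_series_square_nth[of m] by (simp add: numeral_fps_const)
    finally show ?thesis
      using Suc by (simp add: numeral_fps_const)
  qed (simp add: numeral_fps_const)
qed

lemma b_series_lenard: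
  "fps_X * (2 * \<delta> (\<delta> (\<delta> B)) + 8 * (fps_const (u 1) * B) + 16 * (fps_const (u 0) * \<delta> B))
    = 8 * \<delta> B"
proof -
  have eq: "fps_X * (2 * (B * \<delta> (\<delta> (\<delta> B)) + \<delta> B * \<delta> (\<delta> B))
      - (\<delta> B * \<delta> (\<delta> B) + \<delta> (\<delta> B) * \<delta> B)
      + 8 * (fps_const (u 0) * (B * \<delta> B + \<delta> B * B) + fps_const (u 1) * (B * B)))
      = 4 * (B * \<delta> B + \<delta> B * B)"
    using arg_cong[OF b_series_equation, of \<delta>] by (simp add: fps_map_simps)
  have "B * (fps_X * (2 * \<delta> (\<delta> (\<delta> B)) + 8 * (fps_const (u 1) * B)
      + 16 * (fps_const (u 0) * \<delta> B)) - 8 * \<delta> B)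
    = fps_X * (2 * (B * \<delta> (\<delta> (\<delta> B)) + \<delta> B * \<delta> (\<delta> B))
      - (\<delta> B * \<delta> (\<delta> B) + \<delta> (\<delta> B) * \<delta> B)
      + 8 * (fps_const (u 0) * (B * \<delta> B + \<delta> B * B) + fps_const (u 1) * (B * B)))
      - 4 * (B * \<delta> B + \<delta> B * B)"
    by algebra
  also have "\<dots> = 0"
    by (simp only: eq diff_self)
  finally have "fps_X * (2 * \<delta> (\<delta> (\<delta> B)) + 8 * (fps_const (u 1) * B)
      + 16 * (fps_const (u 0) * \<delta> B)) - 8 * \<delta> B = 0"
    by (rule fps_mult_left_cancel[of 1, rotated]) simp
  then show ?thesis
    by simp
qed

lemma b_lenard:
  "2 * d (d (d (bsh d m))) + 8 * (u 1 * bsh d m) + 16 * (u 0 * d (bsh d m)) = 8 * d (bsh d (Suc m))"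
  using arg_cong[OF b_series_lenard, of "\<lambda>F. F $ Suc m"] by simp

definition b_eq_linearized :: "poly\<A> fps \<Rightarrow> poly\<A> fps" where
  "b_eq_linearized Y = 2 * (B * \<delta> (\<delta> Y) + Y * \<delta> (\<delta> B)) - 2 * (\<delta> B * \<delta> Y)
     + 16 * (fps_const (u 0) * (B * Y))"

definition solves_linearized :: "poly\<A> fps \<Rightarrow> poly\<A> fps \<Rightarrow> bool" where
  "solves_linearized V Y \<longleftrightarrow> fps_X * (b_eq_linearized Y + 8 * (V * (B * B))) = 8 * (B * Y)"

lemma solves_linearized_unique:
  assumes "solves_linearized V Y\<^sub>1" and "solves_linearized V Y\<^sub>2"
  shows "Y\<^sub>1 = Y\<^sub>2"
proof -
  let ?W = "8 * (V * (B * B))"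
  have "b_eq_linearized (Y\<^sub>1 - Y\<^sub>2) = b_eq_linearized Y\<^sub>1 - b_eq_linearized Y\<^sub>2"
    unfolding b_eq_linearized_def by (simp add: fps_map_diff algebra_simps)
  then have "fps_X * b_eq_linearized (Y\<^sub>1 - Y\<^sub>2)
      = fps_X * (b_eq_linearized Y\<^sub>1 + ?W) - fps_X * (b_eq_linearized Y\<^sub>2 + ?W)"
    by (simp only:) (simp add: algebra_simps)
  also have "\<dots> = (8 * B) * (Y\<^sub>1 - Y\<^sub>2)"
    using assms by (simp add: solves_linearized_def algebra_simps)
  finally have "fps_X * b_eq_linearized (Y\<^sub>1 - Y\<^sub>2) = (8 * B) * (Y\<^sub>1 - Y\<^sub>2)" .
  moreover have "fps_X ^ n dvd b_eq_linearized Z" if "fps_X ^ n dvd Z" for n Z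
    unfolding b_eq_linearized_def using that
    by (intro dvd_add dvd_diff dvd_mult dvd_mult2 fps_X_power_dvd_map)
  moreover have "cst (1/8) * (8 * B) $ 0 = 1"
    using cst_mult[of "1/8" 8] by (simp add: mult.assoc)
  ultimately have "Y\<^sub>1 - Y\<^sub>2 = 0"
    by (intro fps_causal_eq_zero[where L = b_eq_linearized and f = "8 * B" and x = "cst (1/8)"])
  then show ?thesis
    by simp
qed

lemma commuting_derivation_solves_linearized:
  assumes X: "derivation X" and X_d: "\<And>p. X (d p) = d (X p)"
  shows "solves_linearized (fps_const (X (u 0))) (fps_map X B)"
proof -
  interpret X: derivation X by fact
  have "fps_map X (fps_map d F) = \<delta> (fps_map X F)" for F
    by (rule fps_map_commute) (rule X_d)
  then have "fps_X * (2 * (B * \<delta> (\<delta> (fps_map X B)) + fps_map X B * \<delta> (\<delta> B))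
      - (\<delta> B * \<delta> (fps_map X B) + \<delta> (fps_map X B) * \<delta> B)
      + 8 * (fps_const (u 0) * (B * fps_map X B + fps_map X B * B) + fps_const (X (u 0)) * (B * B)))
      = 4 * (B * fps_map X B + fps_map X B * B)"
    using arg_cong[OF b_series_equation, of "fps_map X"] by (simp add: X.fps_map_simps)
  then show ?thesis
    unfolding solves_linearized_def b_eq_linearized_def by (simp add: algebra_simps)
qed

abbreviation b_trunc :: "nat \<Rightarrow> poly\<A> fps" where
  "b_trunc k \<equiv> fps_cutoff (Suc k) B"

lemma b_trunc_lenard:
  "fps_X * (2 * \<delta> (\<delta> (\<delta> (b_trunc k))) + 8 * (fps_const (u 1) * b_trunc k)
      + 16 * (fps_const (u 0) * \<delta> (b_trunc k)))
    = 8 * \<delta> (b_trunc k) + 8 * (fps_X ^ Suc k * fps_const (d (bsh d (Suc k))))"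
proof (rule fps_ext)
  fix n
  show "(fps_X * (2 * \<delta> (\<delta> (\<delta> (b_trunc k))) + 8 * (fps_const (u 1) * b_trunc k)
      + 16 * (fps_const (u 0) * \<delta> (b_trunc k)))) $ n
    = (8 * \<delta> (b_trunc k) + 8 * (fps_X ^ Suc k * fps_const (d (bsh d (Suc k))))) $ n"
  proof (cases n)
    case (Suc m)
    then show ?thesis
      using b_lenard[of m] by (cases "m < k"; cases "m = k") (auto simp: fps_X_mult_nth fps_X_power_mult_nth)
  qed (simp add: fps_X_power_mult_nth)
qed

definition wronskian :: "nat \<Rightarrow> poly\<A> fps" where
  "wronskian k = \<delta> B * b_trunc k - B * \<delta> (b_trunc k)"

lemma wronskian_tail: "wronskian k = \<delta> (B - b_trunc k) * b_trunc k - (B - b_trunc k) * \<delta> (b_trunc k)"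
  by (simp add: wronskian_def fps_map_diff algebra_simps)

lemma fps_X_power_dvd_wronskian: "fps_X ^ k dvd wronskian k"
proof -
  have T: "fps_X ^ k dvd B - b_trunc k"
    by (simp add: fps_X_power_dvd_iff)
  show ?thesis
    unfolding wronskian_tail using dvd_mult2[OF fps_X_power_dvd_map[OF T]] dvd_mult2[OF T]
    by (rule dvd_diff)
qed

lemma wronskian_equation:
  "fps_X * (b_eq_linearized (wronskian k) + 8 * (fps_X ^ k * (fps_const (d (bsh d (Suc k))) * (B * B))))
    = 8 * (B * wronskian k)"
proof -
  let ?P = "b_trunc k" and ?V = "fps_const (d (bsh d (Suc k)))"
  have "fps_X * (b_eq_linearized (wronskian k) + 8 * (fps_X ^ k * (?V * (B * B)))) - 8 * (B * wronskian k)
    = (B * ?P) * (fps_X * (2 * \<delta> (\<delta> (\<delta> B)) + 8 * (fps_const (u 1) * B)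
        + 16 * (fps_const (u 0) * \<delta> B)) - 8 * \<delta> B)
      - (B * B) * (fps_X * (2 * \<delta> (\<delta> (\<delta> ?P)) + 8 * (fps_const (u 1) * ?P)
        + 16 * (fps_const (u 0) * \<delta> ?P)) - (8 * \<delta> ?P + 8 * (fps_X ^ Suc k * ?V)))"
    unfolding b_eq_linearized_def wronskian_def fps_map_simps power_Suc by algebra
  also have "\<dots> = 0"
    by (simp only: b_series_lenard b_trunc_lenard diff_self mult_zero_right)
  finally show ?thesis
    by simp
qed

lemma b_eq_linearized_X_power_mult: "b_eq_linearized (fps_X ^ k * Y) = fps_X ^ k * b_eq_linearized Y"
  unfolding b_eq_linearized_def fps_map_X_power_mult by (simp add: algebra_simps)

lemma solves_linearized_wronskian:
  "solves_linearized (fps_const (d (bsh d (Suc k)))) (fps_shift k (wronskian k))"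
proof -
  let ?Y = "fps_shift k (wronskian k)" and ?V = "fps_const (d (bsh d (Suc k)))"
  have "fps_X ^ k * (fps_X * (b_eq_linearized ?Y + 8 * (?V * (B * B))) - 8 * (B * ?Y))
      = fps_X * (b_eq_linearized (fps_X ^ k * ?Y) + 8 * (fps_X ^ k * (?V * (B * B))))
        - 8 * (B * (fps_X ^ k * ?Y))"
    by (simp add: b_eq_linearized_X_power_mult algebra_simps)
  also have "\<dots> = 0"
    by (simp add: fps_X_power_mult_shift fps_X_power_dvd_wronskian wronskian_equation)
  finally show ?thesis
    unfolding solves_linearized_def by (simp add: fps_X_power_mult_cancel)
qed

lemma commuting_derivation_on_b:
  assumes "derivation X" and "\<And>p. X (d p) = d (X p)" and "X (u 0) = d (bsh d (Suc k))"
  shows "X (bsh d l) = wronskian k $ (l + k)"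
proof -
  have "fps_map X B = fps_shift k (wronskian k)"
    using solves_linearized_unique[OF commuting_derivation_solves_linearized[OF assms(1,2)]]
      solves_linearized_wronskian assms(3) by simp
  then show ?thesis
    by (metis fps_map_nth fps_nth_Abs_fps fps_shift_nth)
qed

lemma wronskian_nth:
  "wronskian k $ (k + l + 1) = (\<Sum>j\<le>min k l.
     d (bsh d (k + l + 1 - j)) * bsh d j - bsh d (k + l + 1 - j) * d (bsh d j))"
proof -
  let ?n = "k + l + 1"
  let ?q = "\<lambda>i. d (bsh d i) * bsh d (?n - i) - bsh d i * d (bsh d (?n - i))"
  have "wronskian k $ ?n = (\<Sum>i=0..?n. d ((B - b_trunc k) $ i) * b_trunc k $ (?n - i)
      - (B - b_trunc k) $ i * d (b_trunc k $ (?n - i)))"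
    unfolding wronskian_tail by (simp add: fps_mult_nth sum_subtractf)
  also have "\<dots> = (\<Sum>i\<in>{i\<in>{0..?n}. k < i \<and> ?n - i \<le> k}. ?q i)"
    unfolding sum.inter_filter[OF finite_atLeastAtMost] by (intro sum.cong refl) auto
  also have "\<dots> = (\<Sum>j\<le>min k l. ?q (?n - j))"
    by (rule sum.reindex_bij_witness[where i = "\<lambda>j. ?n - j" and j = "\<lambda>i. ?n - i"]) auto
  also have "\<dots> = (\<Sum>j\<le>min k l.
      d (bsh d (?n - j)) * bsh d j - bsh d (?n - j) * d (bsh d j))"
    by (intro sum.cong refl) auto
  finally show ?thesis .
qed

lemma wronskian_symmetric: "wronskian k $ (k + l + 1) = wronskian l $ (l + k + 1)"
  unfolding wronskian_nth by (simp only: add.commute[of k l] min.commute[of k l])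

lemma commuting_derivations_on_b_symmetric:
  assumes "derivation X" and "\<And>p. X (d p) = d (X p)" and "X (u 0) = d (bsh d (Suc k))"
    and "derivation Y" and "\<And>p. Y (d p) = d (Y p)" and "Y (u 0) = d (bsh d (Suc l))"
  shows "X (bsh d (Suc l)) = Y (bsh d (Suc k))"
  using commuting_derivation_on_b[OF assms(1-3), of "Suc l"]
    commuting_derivation_on_b[OF assms(4-6), of "Suc k"] wronskian_symmetric[of k l]
  by (simp add: ac_simps)

end

section \<open>The flows\<close>

context shift_derivation
begin

lemma flows_commute:
  assumes D: "\<And>k. derivation (D k)" and D_d: "\<And>k p. D k (d p) = d (D k p)"
    and D_u0: "\<And>k. D k (u 0) = cst (1 / of_nat (dfact (2 * k + 1))) * d (b d (int k))"
  shows "D k (D l p) = D l (D k p)"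
proof -
  define c :: "nat \<Rightarrow> rat" where "c k = of_nat (dfact (2 * k + 1))" for k
  have c: "c k \<noteq> 0" for k
    using dfact_pos[of "2 * k + 1"] by (simp add: c_def)
  define X where "X k p = cst (c k) * D k p" for k p
  have X: "derivation (X k)" for k
    unfolding X_def using derivation_cst_mult[OF D] .
  have X_d: "X k (d p) = d (X k p)" for k p
    by (simp add: X_def D_d der_cst_mult)
  have X_u0: "X k (u 0) = d (bsh d (Suc k))" for k
  proof -
    have "X k (u 0) = cst (c k) * (cst (1 / c k) * d (bsh d (Suc k)))"
      by (simp only: X_def D_u0 b_int c_def)
    then show ?thesis
      using cst_inverse_cancel(1)[OF c] by simp
  qed
  have D_X: "D k p = cst (1 / c k) * X k p" for k p
    using c by (simp add: X_def cst_inverse_cancel)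
  have DD_u0: "D k (D l (u 0)) = cst (1 / c l) * (cst (1 / c k) * d (X k (bsh d (Suc l))))" for k l
  proof -
    have "D k (D l (u 0)) = cst (1 / c l) * d (D k (bsh d (Suc l)))"
      by (simp only: D_u0 b_int c_def derivation.der_cst_mult[OF D] D_d)
    then show ?thesis
      by (simp add: D_X[of k] der_cst_mult)
  qed
  have u0: "D k (D l (u 0)) - D l (D k (u 0)) = 0"
    unfolding DD_u0 commuting_derivations_on_b_symmetric[OF X X_d X_u0 X X_d X_u0]
    by (simp add: ac_simps)
  have comm: "D k (D l (d q)) - D l (D k (d q)) = d (D k (D l q) - D l (D k q))" for q
    by (simp add: D_d der_diff)
  have "D k (D l p) - D l (D k p) = 0"
    by (rule commuting_derivation_eq_zeroI[OF derivation_commutator[OF D D], OF comm u0])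
  then show ?thesis
    by simp
qed

lemma flow_0_eq_d:
  assumes "derivation D\<^sub>0" and "\<And>p. D\<^sub>0 (d p) = d (D\<^sub>0 p)"
    and "D\<^sub>0 (u 0) = cst (1 / of_nat (dfact 1)) * d (b d 0)"
  shows "D\<^sub>0 = d"
  using assms b_int[of d 0] by (intro commuting_derivation_eqI) (simp_all add: bsh_1)

end

theorem corollary2p8:
  fixes d :: "poly\<A> \<Rightarrow> poly\<A>" and D :: "nat \<Rightarrow> poly\<A> \<Rightarrow> poly\<A>"
  assumes d_der: "is_derivation d"
    and d_u: "\<And>i. d (u i) = u (Suc i)"
    and D_der: "\<And>k. is_derivation (D k)"
    and D_comm: "\<And>k p. D k (d p) = d (D k p)"
    and D_u0: "\<And>k. D k (u 0) = cst (1 / of_nat (dfact (2*k+1))) * d (b d (int k))"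
  shows "(\<forall>k l p. D k (D l p) = D l (D k p))
         \<and> D 0 = d
         \<and> Q d 0 = 0
         \<and> Q d 1 = cst (1/12) * u 3
         \<and> (\<forall>k. in_A_ge2 (Q d k))"
proof -
  interpret shift_derivation d
    by unfold_locales (simp_all add: d_der d_u)
  have D: "derivation (D k)" for k
    using D_der by (simp add: derivation_def)
  have "D 0 = d"
    using D_u0[of 0] by (intro flow_0_eq_d D D_comm) simp
  then show ?thesis
    using flows_commute[OF D D_comm D_u0] Q_0 Q_1 Q_deg_ge_2 by (simp add: in_A_ge2_iff_deg_ge)
qed

end
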